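(* Assume $\ker(K)\cap\ker(D)=\{0\}$ and fix $\delta\ge0$ and data $y^\delta$. Let $\{\Psi_k\}_{k\in\mathbb{N}}$ be a sequence of reconstructors and $\Psi^*$ a reconstructor such that $\sup_{y\in\mathcal{Y}^\delta}\|\Psi_k(y)-\Psi^*(y)\|_1\to0$ as $k\to\infty$, where $\mathcal{Y}^\delta=\{y\in\mathbb{R}^m:\inf_{x\in\mathcal{X}}\|Kx-y\|_2\le\delta\}$. For each $k$ let $x^*_{\Psi_k,\delta}$ be the unique minimizer over $\mathcal{X}$ of $\mathcal{J}_{\Psi_k,\delta}(x)=\|Kx-y^\delta\|_2^2+\lambda\|w(\Psi_k(y^\delta))\odot|Dx|\|_1$, and let $x^*_{\Psi^*,\delta}$ denote the unique minimizer over $\mathcal{X}$ of $\mathcal{J}_{\Psi^*,\delta}(x)=\|Kx-y^\delta\|_2^2+\lambda\|w(\Psi^*(y^\delta))\odot|Dx|\|_1$. Then $\{x^*_{\Psi_k,\delta}\}_{k\in\mathbb{N}}$ has a convergent subsequence whose limit is $x^*_{\Psi^*,\delta}$.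
   Context: Let $K\in\mathbb{R}^{m\times n}$ with $m\le n$, and let $D_h,D_v\in\mathbb{R}^{n\times n}$ be the discrete horizontal and vertical difference operators; $Dx=\begin{bmatrix}D_hx\\ D_vx\end{bmatrix}\in\mathbb{R}^{2n}$, and $|Dx|\in\mathbb{R}^n$, $(|Dx|)_i=\sqrt{(D_hx)_i^2+(D_vx)_i^2}$. $\mathcal{X}=\{x\in\mathbb{R}^n: x_i\ge 0\ \forall i\}$. Fix $\lambda>0$, $\eta>0$, $p\in(0,1)$, and for $\tilde x\in\mathbb{R}^n$ define $(w(\tilde{x}))_i=\big(\eta/\sqrt{\eta^2+(|D\tilde{x}|)_i^2}\big)^{1-p}$. A reconstructor is a Lipschitz continuous map $\Psi:\mathbb{R}^m\to\mathbb{R}^n$. The data is $y^\delta=Kx^{GT}+e$ with $x^{GT}\in\mathcal{X}$ and $\|e\|_2\le\delta$. $\odot$ is the entrywise product. *)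

theory Defs
  imports "HOL-Analysis.Analysis"
begin

definition l1norm :: "real ^ 'n \<Rightarrow> real" where
  "l1norm x = (\<Sum>i\<in>UNIV. \<bar>x $ i\<bar>)"

definition nonneg_set :: "(real ^ 'n) set" where
  "nonneg_set = {x. \<forall>i. x $ i \<ge> 0}"

definition grad_mag :: "real ^ 'n ^ 'n \<Rightarrow> real ^ 'n ^ 'n \<Rightarrow> real ^ 'n \<Rightarrow> real ^ 'n" where
  "grad_mag Dh Dv x = (\<chi> i. sqrt (((Dh *v x) $ i)\<^sup>2 + ((Dv *v x) $ i)\<^sup>2))"

definition weight :: "real \<Rightarrow> real \<Rightarrow> real ^ 'n ^ 'n \<Rightarrow> real ^ 'n ^ 'n \<Rightarrow> real ^ 'n \<Rightarrow> real ^ 'n" where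
  "weight \<eta> p Dh Dv xt =
     (\<chi> i. (\<eta> / sqrt (\<eta>\<^sup>2 + ((grad_mag Dh Dv xt) $ i)\<^sup>2)) powr (1 - p))"

definition reconstructor :: "(real ^ 'm \<Rightarrow> real ^ 'n) \<Rightarrow> bool" where
  "reconstructor \<Psi> \<longleftrightarrow> (\<exists>L. L-lipschitz_on UNIV \<Psi>)"

definition J_fun :: "real ^ 'n ^ 'm \<Rightarrow> real ^ 'n ^ 'n \<Rightarrow> real ^ 'n ^ 'n \<Rightarrow> real \<Rightarrow> real \<Rightarrow> real
    \<Rightarrow> (real ^ 'm \<Rightarrow> real ^ 'n) \<Rightarrow> real ^ 'm \<Rightarrow> real ^ 'n \<Rightarrow> real" where
  "J_fun K Dh Dv lam \<eta> p \<Psi> y x =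
     (norm (K *v x - y))\<^sup>2 + lam * l1norm (weight \<eta> p Dh Dv (\<Psi> y) * grad_mag Dh Dv x)"

definition Y_set :: "real ^ 'n ^ 'm \<Rightarrow> real \<Rightarrow> (real ^ 'm) set" where
  "Y_set K \<delta> = {y. (INF x\<in>nonneg_set. norm (K *v x - y)) \<le> \<delta>}"

definition is_min_on :: "('a \<Rightarrow> real) \<Rightarrow> 'a set \<Rightarrow> 'a \<Rightarrow> bool" where
  "is_min_on f S x \<longleftrightarrow> x \<in> S \<and> (\<forall>z\<in>S. f x \<le> f z)"

end

theory Submission imports Defs begin

(*
  The weights w(\<Psi>\<^sub>k(y\<^sup>\<delta>)) converge to w(\<Psi>\<^sup>*(y\<^sup>\<delta>)), which has positive entries, so they are
  bounded below by a common constant c > 0. Comparing with x = 0, every minimizer x\<^sub>k has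
  objective value at most \<parallel>y\<^sup>\<delta>\<parallel>\<^sup>2, which bounds \<parallel>K x\<^sub>k\<parallel> and (through c) \<parallel>D x\<^sub>k\<parallel>; since
  ker K \<inter> ker D = {0}, this bounds x\<^sub>k. By Bolzano-Weierstrass a subsequence converges, and
  since the objective is jointly continuous in the weights and in x, its limit minimizes
  the limiting functional, hence is the minimizer for \<Psi>\<^sup>* by uniqueness.
*)

definition weighted_tv ::
    "real ^ 'n ^ 'm \<Rightarrow> real ^ 'n ^ 'n \<Rightarrow> real ^ 'n ^ 'n \<Rightarrow> real \<Rightarrow> real ^ 'm
      \<Rightarrow> real ^ 'n \<Rightarrow> real ^ 'n \<Rightarrow> real" where
  "weighted_tv K Dh Dv lam y w x = (norm (K *v x - y))\<^sup>2 + lam * l1norm (w * grad_mag Dh Dv x)"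

lemma J_fun_eq_weighted_tv:
  "J_fun K Dh Dv lam \<eta> p \<Psi> y x = weighted_tv K Dh Dv lam y (weight \<eta> p Dh Dv (\<Psi> y)) x"
  unfolding J_fun_def weighted_tv_def ..

lemma closed_nonneg_set: "closed nonneg_set"
  unfolding nonneg_set_def by (rule closed_positive_orthant)

lemma zero_in_nonneg_set: "0 \<in> nonneg_set"
  unfolding nonneg_set_def by simp

lemma l1norm_nonneg: "l1norm x \<ge> 0"
  unfolding l1norm_def by (simp add: sum_nonneg)

lemma norm_le_l1norm: "norm x \<le> l1norm x"
  unfolding l1norm_def by (rule norm_le_l1_cart)

lemma grad_mag_nonneg: "grad_mag Dh Dv x $ i \<ge> 0"
  unfolding grad_mag_def by simp

lemma grad_mag_zero: "grad_mag Dh Dv 0 = 0"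
  unfolding grad_mag_def by (simp add: vec_eq_iff)

lemma abs_grad_components_le_grad_mag:
  "\<bar>(Dh *v x) $ i\<bar> \<le> grad_mag Dh Dv x $ i" "\<bar>(Dv *v x) $ i\<bar> \<le> grad_mag Dh Dv x $ i"
  unfolding grad_mag_def by simp_all

lemma norm_grad_components_le_l1norm_grad_mag:
  "norm (Dh *v x) \<le> l1norm (grad_mag Dh Dv x)" "norm (Dv *v x) \<le> l1norm (grad_mag Dh Dv x)"
  unfolding l1norm_def
  using abs_grad_components_le_grad_mag
  by (auto intro!: order_trans[OF norm_le_l1_cart] sum_mono
      simp: abs_of_nonneg[OF grad_mag_nonneg])

lemma weight_pos:
  assumes "\<eta> > 0"
  shows "weight \<eta> p Dh Dv x $ i > 0"
  using assms unfolding weight_def by (simp add: add_pos_nonneg)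

lemma l1norm_weighted_ge:
  fixes w g :: "real ^ 'n"
  assumes "\<And>i. c \<le> w $ i" "\<And>i. 0 \<le> g $ i"
  shows "c * l1norm g \<le> l1norm (w * g)"
proof -
  have "c * l1norm g = (\<Sum>i\<in>UNIV. c * g $ i)"
    unfolding l1norm_def using assms(2) by (simp add: sum_distrib_left)
  also have "\<dots> \<le> (\<Sum>i\<in>UNIV. \<bar>(w * g) $ i\<bar>)"
    using assms(2)
    by (intro sum_mono) (simp add: abs_mult mult_right_mono order_trans[OF assms(1) abs_ge_self])
  finally show ?thesis unfolding l1norm_def .
qed

lemma tendsto_matrix_vector_mult:
  fixes A :: "real ^ 'n ^ 'm"
  assumes "(f \<longlongrightarrow> a) F"
  shows "((\<lambda>k. A *v f k) \<longlongrightarrow> A *v a) F"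
  using bounded_linear.tendsto[OF matrix_vector_mul_bounded_linear assms] .

lemma tendsto_vector_times:
  fixes f g :: "'a \<Rightarrow> real ^ 'n"
  assumes "(f \<longlongrightarrow> a) F" "(g \<longlongrightarrow> b) F"
  shows "((\<lambda>k. f k * g k) \<longlongrightarrow> a * b) F"
proof -
  have "f k * g k = (\<chi> i. f k $ i * g k $ i)" "a * b = (\<chi> i. a $ i * b $ i)" for k
    by (simp_all add: vec_eq_iff)
  then show ?thesis
    by (simp only:) (intro tendsto_vec_lambda tendsto_mult tendsto_vec_nth assms)
qed

lemma tendsto_l1norm:
  assumes "(f \<longlongrightarrow> a) F"
  shows "((\<lambda>k. l1norm (f k)) \<longlongrightarrow> l1norm a) F"
  unfolding l1norm_def by (intro tendsto_sum tendsto_rabs tendsto_vec_nth assms)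

lemma tendsto_grad_mag:
  assumes "(f \<longlongrightarrow> a) F"
  shows "((\<lambda>k. grad_mag Dh Dv (f k)) \<longlongrightarrow> grad_mag Dh Dv a) F"
  unfolding grad_mag_def
  by (intro tendsto_vec_lambda tendsto_intros tendsto_matrix_vector_mult assms)

lemma tendsto_weight:
  assumes "(f \<longlongrightarrow> a) F" "\<eta> > 0"
  shows "((\<lambda>k. weight \<eta> p Dh Dv (f k)) \<longlongrightarrow> weight \<eta> p Dh Dv a) F"
  unfolding weight_def
proof (intro tendsto_vec_lambda tendsto_powr tendsto_const tendsto_divide tendsto_real_sqrt
    tendsto_add tendsto_power tendsto_vec_nth tendsto_grad_mag assms(1))
  fix i
  have "sqrt (\<eta>\<^sup>2 + (grad_mag Dh Dv a $ i)\<^sup>2) > 0"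
    using assms(2) by (simp add: add_pos_nonneg)
  with assms(2) show "sqrt (\<eta>\<^sup>2 + (grad_mag Dh Dv a $ i)\<^sup>2) \<noteq> 0"
    and "\<eta> / sqrt (\<eta>\<^sup>2 + (grad_mag Dh Dv a $ i)\<^sup>2) \<noteq> 0"
    by simp_all
qed

lemma tendsto_weighted_tv:
  assumes "(w \<longlongrightarrow> w0) F" "(x \<longlongrightarrow> x0) F"
  shows "((\<lambda>k. weighted_tv K Dh Dv lam y (w k) (x k)) \<longlongrightarrow> weighted_tv K Dh Dv lam y w0 x0) F"
  unfolding weighted_tv_def
  by (intro tendsto_intros tendsto_l1norm tendsto_vector_times tendsto_grad_mag
      tendsto_matrix_vector_mult assms)

lemma convergent_positive_vectors_uniformly_bounded_below:
  fixes f :: "nat \<Rightarrow> real ^ 'n"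
  assumes "f \<longlonglongrightarrow> a" "\<And>k i. f k $ i > 0" "\<And>i. a $ i > 0"
  obtains c where "c > 0" "\<And>k i. c \<le> f k $ i"
proof -
  define V where "V = (\<Union>i. (\<lambda>x. x $ i) ` insert a (range f))"
  have "compact V"
    unfolding V_def using compact_sequence_with_limit[OF assms(1)]
    by (intro compact_UN finite compact_continuous_image continuous_intros)
  moreover have "V \<noteq> {}" unfolding V_def by blast
  ultimately obtain c where c: "c \<in> V" "\<And>v. v \<in> V \<Longrightarrow> c \<le> v"
    using compact_attains_inf by metis
  show thesis
  proof (rule that)
    show "c > 0" using c(1) assms(2,3) unfolding V_def by auto
    show "c \<le> f k $ i" for k i by (rule c(2)) (auto simp: V_def)
  qed
qed

lemma joint_kernel_trivial_imp_bounded_below: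
  fixes K :: "real ^ 'n ^ 'm" and Dh Dv :: "real ^ 'n ^ 'n"
  assumes "\<And>x. K *v x = 0 \<Longrightarrow> Dh *v x = 0 \<Longrightarrow> Dv *v x = 0 \<Longrightarrow> x = 0"
  obtains B where "B > 0" "\<And>x. B * norm x \<le> norm (K *v x) + norm (Dh *v x) + norm (Dv *v x)"
proof -
  let ?f = "\<lambda>x. (K *v x, (Dh *v x, Dv *v x))"
  have lin: "linear ?f"
    by (intro bounded_linear.linear bounded_linear_Pair matrix_vector_mul_bounded_linear)
  moreover have "inj ?f"
    using assms by (auto simp: linear_injective_0[OF lin] zero_prod_def)
  ultimately obtain B where "B > 0" "\<And>x. B * norm x \<le> norm (?f x)"
    using linear_inj_bounded_below_pos by blast
  moreover have "norm (?f x) \<le> norm (K *v x) + norm (Dh *v x) + norm (Dv *v x)" for x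
    using norm_Pair_le[of "K *v x" "(Dh *v x, Dv *v x)"] norm_Pair_le[of "Dh *v x" "Dv *v x"]
    by linarith
  ultimately show thesis using that by (meson order_trans)
qed

lemma weighted_tv_sublevel_bounded:
  fixes K :: "real ^ 'n ^ 'm" and Dh Dv :: "real ^ 'n ^ 'n"
  assumes ker: "\<And>x. K *v x = 0 \<Longrightarrow> Dh *v x = 0 \<Longrightarrow> Dv *v x = 0 \<Longrightarrow> x = 0"
    and "lam > 0" "c > 0"
  shows "\<exists>R. \<forall>w x. (\<forall>i. c \<le> w $ i) \<longrightarrow> weighted_tv K Dh Dv lam y w x \<le> T \<longrightarrow> norm x \<le> R"
proof -
  obtain B where B: "B > 0" "\<And>x. B * norm x \<le> norm (K *v x) + norm (Dh *v x) + norm (Dv *v x)"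
    using joint_kernel_trivial_imp_bounded_below[OF ker] by blast
  have "norm x \<le> (sqrt T + norm y + 2 * (T / (lam * c))) / B"
    if w: "\<forall>i. c \<le> w $ i" and T: "weighted_tv K Dh Dv lam y w x \<le> T" for w x
  proof -
    let ?g = "l1norm (grad_mag Dh Dv x)"
    have "lam * (c * ?g) \<le> lam * l1norm (w * grad_mag Dh Dv x)"
      using w grad_mag_nonneg assms(2) by (intro mult_left_mono l1norm_weighted_ge) auto
    with T have "(norm (K *v x - y))\<^sup>2 + lam * c * ?g \<le> T"
      unfolding weighted_tv_def by (simp add: mult.assoc)
    moreover have "lam * c * ?g \<ge> 0"
      using assms(2,3) by (simp add: l1norm_nonneg)
    ultimately have "(norm (K *v x - y))\<^sup>2 \<le> T" "lam * c * ?g \<le> T"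
      using zero_le_power2[of "norm (K *v x - y)"] by linarith+
    then have K_bound: "norm (K *v x - y) \<le> sqrt T" and g_bound: "?g \<le> T / (lam * c)"
      using assms(2,3) by (simp_all add: real_le_rsqrt pos_le_divide_eq mult.commute)
    have "B * norm x \<le> sqrt T + norm y + 2 * (T / (lam * c))"
      using B(2)[of x] K_bound g_bound norm_triangle_sub[of "K *v x" y]
        norm_grad_components_le_l1norm_grad_mag[where Dh = Dh and Dv = Dv and x = x] by linarith
    then show ?thesis using B(1) by (simp add: field_simps)
  qed
  then show ?thesis by blast
qed

lemma weighted_tv_min_le_norm_sq:
  assumes "is_min_on (weighted_tv K Dh Dv lam y w) nonneg_set x"
  shows "weighted_tv K Dh Dv lam y w x \<le> (norm y)\<^sup>2"
proof -
  have "weighted_tv K Dh Dv lam y w x \<le> weighted_tv K Dh Dv lam y w 0"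
    using assms zero_in_nonneg_set unfolding is_min_on_def by blast
  also have "\<dots> = (norm y)\<^sup>2"
    by (simp add: weighted_tv_def l1norm_def grad_mag_zero)
  finally show ?thesis .
qed

lemma is_min_on_limit:
  fixes F :: "nat \<Rightarrow> 'a::topological_space \<Rightarrow> real"
  assumes "closed S" "\<And>k. is_min_on (F k) S (x k)" "x \<longlonglongrightarrow> l"
    and "(\<lambda>k. F k (x k)) \<longlonglongrightarrow> G l" "\<And>z. z \<in> S \<Longrightarrow> (\<lambda>k. F k z) \<longlonglongrightarrow> G z"
  shows "is_min_on G S l"
proof -
  have "l \<in> S"
    using assms(1-3) unfolding is_min_on_def by (meson closed_sequentially)
  moreover have "G l \<le> G z" if "z \<in> S" for z
    using assms(2) that unfolding is_min_on_def
    by (intro LIMSEQ_le[OF assms(4) assms(5)[OF that]]) auto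
  ultimately show ?thesis unfolding is_min_on_def by blast
qed

lemma weighted_tv_minimizers_bounded:
  fixes K :: "real ^ 'n ^ 'm" and Dh Dv :: "real ^ 'n ^ 'n" and W :: "nat \<Rightarrow> real ^ 'n"
  assumes ker: "\<And>x. K *v x = 0 \<Longrightarrow> Dh *v x = 0 \<Longrightarrow> Dv *v x = 0 \<Longrightarrow> x = 0"
    and "lam > 0" and "W \<longlonglongrightarrow> Ws" "\<And>k i. W k $ i > 0" "\<And>i. Ws $ i > 0"
    and min: "\<And>k. is_min_on (weighted_tv K Dh Dv lam y (W k)) nonneg_set (x k)"
  shows "bounded (range x)"
proof -
  obtain c where "c > 0" "\<And>k i. c \<le> W k $ i"
    using convergent_positive_vectors_uniformly_bounded_below assms(3-5) by blast
  then obtain R where "\<And>k. norm (x k) \<le> R"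
    using weighted_tv_sublevel_bounded[where K = K and Dh = Dh and Dv = Dv and y = y
        and T = "(norm y)\<^sup>2", OF ker assms(2) \<open>c > 0\<close>]
      weighted_tv_min_le_norm_sq[OF min] by blast
  then show ?thesis
    unfolding bounded_iff by blast
qed

lemma weighted_tv_minimizers_limit:
  assumes "W \<longlonglongrightarrow> Ws" "x \<longlonglongrightarrow> l"
    and "\<And>k. is_min_on (weighted_tv K Dh Dv lam y (W k)) nonneg_set (x k)"
  shows "is_min_on (weighted_tv K Dh Dv lam y Ws) nonneg_set l"
proof (rule is_min_on_limit[OF closed_nonneg_set assms(3,2)])
  show "(\<lambda>k. weighted_tv K Dh Dv lam y (W k) (x k)) \<longlonglongrightarrow> weighted_tv K Dh Dv lam y Ws l"
    using assms(1,2) by (rule tendsto_weighted_tv)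
  show "(\<lambda>k. weighted_tv K Dh Dv lam y (W k) z) \<longlonglongrightarrow> weighted_tv K Dh Dv lam y Ws z" for z
    using assms(1) tendsto_const by (rule tendsto_weighted_tv)
qed

lemma uniform_l1_convergence_imp_pointwise:
  assumes "(\<lambda>k. SUP y\<in>S. ereal (l1norm (f k y - g y))) \<longlonglongrightarrow> 0" "y \<in> S"
  shows "(\<lambda>k. f k y) \<longlonglongrightarrow> g y"
proof -
  have "(\<lambda>k. ereal (l1norm (f k y - g y))) \<longlonglongrightarrow> 0"
    by (rule tendsto_sandwich[OF _ _ tendsto_const assms(1)])
      (auto intro!: always_eventually SUP_upper2[OF assms(2)] simp: l1norm_nonneg)
  then have "(\<lambda>k. l1norm (f k y - g y)) \<longlonglongrightarrow> 0"
    by (simp add: zero_ereal_def)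
  then have "(\<lambda>k. norm (f k y - g y)) \<longlonglongrightarrow> 0"
    by (rule tendsto_sandwich[rotated 2, OF tendsto_const])
      (auto intro!: always_eventually norm_le_l1norm)
  then show ?thesis
    using tendsto_norm_zero_iff LIM_zero_cancel by blast
qed

lemma noisy_data_in_Y_set:
  assumes "x \<in> nonneg_set" "norm e \<le> \<delta>"
  shows "K *v x + e \<in> Y_set K \<delta>"
proof -
  have "(INF z\<in>nonneg_set. norm (K *v z - (K *v x + e))) \<le> norm (K *v x - (K *v x + e))"
    using assms(1) by (intro cINF_lower bdd_belowI[where m = 0]) auto
  also have "\<dots> \<le> \<delta>"
    using assms(2) by simp
  finally show ?thesis
    unfolding Y_set_def ..
qed

theorem theorem4:
  fixes K :: "real ^ 'n ^ 'm" and Dh Dv :: "real ^ 'n ^ 'n"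
    and lam \<eta> p \<delta> :: real and y\<delta> :: "real ^ 'm"
    and xGT :: "real ^ 'n" and e :: "real ^ 'm"
    and \<Psi> :: "nat \<Rightarrow> real ^ 'm \<Rightarrow> real ^ 'n" and \<Psi>s :: "real ^ 'm \<Rightarrow> real ^ 'n"
    and xk :: "nat \<Rightarrow> real ^ 'n" and xs :: "real ^ 'n"
  assumes "CARD('m) \<le> CARD('n)"
    and "lam > 0" and "\<eta> > 0" and "0 < p" and "p < 1"
    and ker: "\<And>x. K *v x = 0 \<Longrightarrow> Dh *v x = 0 \<Longrightarrow> Dv *v x = 0 \<Longrightarrow> x = 0"
    and "\<delta> \<ge> 0"
    and "xGT \<in> nonneg_set" and "norm e \<le> \<delta>" and "y\<delta> = K *v xGT + e"
    and "\<And>k. reconstructor (\<Psi> k)" and "reconstructor \<Psi>s"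
    and unif: "(\<lambda>k. SUP y\<in>Y_set K \<delta>. ereal (l1norm (\<Psi> k y - \<Psi>s y))) \<longlonglongrightarrow> 0"
    and xk_min: "\<And>k. is_min_on (J_fun K Dh Dv lam \<eta> p (\<Psi> k) y\<delta>) nonneg_set (xk k)"
    and xk_uniq: "\<And>k z. is_min_on (J_fun K Dh Dv lam \<eta> p (\<Psi> k) y\<delta>) nonneg_set z \<Longrightarrow> z = xk k"
    and xs_min: "is_min_on (J_fun K Dh Dv lam \<eta> p \<Psi>s y\<delta>) nonneg_set xs"
    and xs_uniq: "\<And>z. is_min_on (J_fun K Dh Dv lam \<eta> p \<Psi>s y\<delta>) nonneg_set z \<Longrightarrow> z = xs"
  shows "\<exists>r. strict_mono r \<and> (xk \<circ> r) \<longlonglongrightarrow> xs"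
proof -
  define W where "W k = weight \<eta> p Dh Dv (\<Psi> k y\<delta>)" for k
  define Ws where "Ws = weight \<eta> p Dh Dv (\<Psi>s y\<delta>)"
  let ?J = "weighted_tv K Dh Dv lam y\<delta>"
  have min_k: "is_min_on (?J (W k)) nonneg_set (xk k)" for k
    using xk_min unfolding J_fun_eq_weighted_tv W_def .
  have "(\<lambda>k. \<Psi> k y\<delta>) \<longlonglongrightarrow> \<Psi>s y\<delta>"
    using uniform_l1_convergence_imp_pointwise[OF unif] noisy_data_in_Y_set assms(8-10) by blast
  then have W_lim: "W \<longlonglongrightarrow> Ws"
    unfolding W_def Ws_def using tendsto_weight assms(3) by blast
  have "bounded (range xk)"
    by (rule weighted_tv_minimizers_bounded[OF _ assms(2) W_lim])
      (use ker min_k in \<open>simp_all add: W_def Ws_def weight_pos assms(3)\<close>)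
  then obtain l r where r: "strict_mono r" "(xk \<circ> r) \<longlonglongrightarrow> l"
    using bounded_imp_convergent_subsequence by blast
  have "is_min_on (?J Ws) nonneg_set l"
    by (rule weighted_tv_minimizers_limit[OF LIMSEQ_subseq_LIMSEQ[OF W_lim r(1)] r(2)])
      (simp add: min_k)
  then have "l = xs"
    using xs_uniq unfolding J_fun_eq_weighted_tv Ws_def by blast
  with r show ?thesis by blast
qed

end
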